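(* For every $n$, the parking order $\le_P$ on parking functions of degree $n$ admits least upper bounds: for parking functions $f=(\sigma,s)$ and $g=(\tau,t)$ of degree $n$, the pair $(\sigma\vee\tau,\ s\vee t)$ is a parking function and it is the least upper bound $f\vee g$ in $\le_P$ (joins taken in the weak order and in the Tamari order respectively).
   Context: $\mathrm{PBT}_n$ is the set of planar binary trees (each internal node has exactly two children, left and right) with $n+1$ leaves, leaves numbered left to right; $\mathrm{Des}(t)=\{1\le i\le n-1:\text{the }(i+1)\text{-st leaf of }t\text{ is a right child}\}$. For $\sigma\in S_n$ (one-line notation), $\mathrm{Des}(\sigma)=\{i:\sigma(i)>\sigma(i+1)\}$ and $\mathrm{Inv}(\sigma)=\{(i,j):i<j,\sigma(i)>\sigma(j)\}$. A parking function of degree $n$ is a pair $(\sigma,t)\in S_n\times\mathrm{PBT}_n$ with $\mathrm{Des}(t)\subseteq\mathrm{Des}(\sigma)$. The (left) weak order: $\sigma\le_w\tau$ iff $\mathrm{Inv}(\sigma)\subseteq\mathrm{Inv}(\tau)$. The Tamari order $\le_T$ on $\mathrm{PBT}_n$ is the reflexive–transitive closure of $s\le t$ whenever $t$ is obtained from $s$ by replacing a subtree of the form $x(A,y(B,C))$ by $x(y(A,B),C)$ (left rotation). Both are lattices. The parking order: $(\sigma,s)\le_P(\tau,t)$ iff $\sigma\le_w\tau$ and $s\le_T t$. *)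

theory Defs
  imports "HOL-Combinatorics.Permutations"
begin

definition perm_des :: "nat \<Rightarrow> (nat \<Rightarrow> nat) \<Rightarrow> nat set" where
  "perm_des n \<sigma> = {i. 1 \<le> i \<and> i \<le> n - 1 \<and> \<sigma> i > \<sigma> (i + 1)}"

definition perm_inv :: "nat \<Rightarrow> (nat \<Rightarrow> nat) \<Rightarrow> (nat \<times> nat) set" where
  "perm_inv n \<sigma> = {(i, j). 1 \<le> i \<and> i < j \<and> j \<le> n \<and> \<sigma> i > \<sigma> j}"

definition weak_le :: "nat \<Rightarrow> (nat \<Rightarrow> nat) \<Rightarrow> (nat \<Rightarrow> nat) \<Rightarrow> bool" where
  "weak_le n \<sigma> \<tau> \<longleftrightarrow> perm_inv n \<sigma> \<subseteq> perm_inv n \<tau>"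

definition is_weak_join :: "nat \<Rightarrow> (nat \<Rightarrow> nat) \<Rightarrow> (nat \<Rightarrow> nat) \<Rightarrow> (nat \<Rightarrow> nat) \<Rightarrow> bool" where
  "is_weak_join n \<sigma> \<tau> u \<longleftrightarrow> u permutes {1..n} \<and> weak_le n \<sigma> u \<and> weak_le n \<tau> u \<and>
     (\<forall>v. v permutes {1..n} \<and> weak_le n \<sigma> v \<and> weak_le n \<tau> v \<longrightarrow> weak_le n u v)"

datatype pbt = Leaf | Node pbt pbt

fun leaves :: "pbt \<Rightarrow> nat" where
  "leaves Leaf = 1"
| "leaves (Node l r) = leaves l + leaves r"

text \<open>For each leaf, from left to right: is it a right child? (The root leaf of the
  one-leaf tree gets the flag given as argument; it is irrelevant for descents.)\<close>
fun leaf_is_right :: "bool \<Rightarrow> pbt \<Rightarrow> bool list" where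
  "leaf_is_right b Leaf = [b]"
| "leaf_is_right b (Node l r) = leaf_is_right False l @ leaf_is_right True r"

definition pbt_set :: "nat \<Rightarrow> pbt set" where
  "pbt_set n = {t. leaves t = n + 1}"

text \<open>Des(t): i in 1..n-1 such that the (i+1)-st leaf (list index i) is a right child.\<close>
definition tree_des :: "nat \<Rightarrow> pbt \<Rightarrow> nat set" where
  "tree_des n t = {i. 1 \<le> i \<and> i \<le> n - 1 \<and> leaf_is_right False t ! i}"

inductive rot :: "pbt \<Rightarrow> pbt \<Rightarrow> bool" where
  root: "rot (Node A (Node B C)) (Node (Node A B) C)"
| left: "rot l l' \<Longrightarrow> rot (Node l r) (Node l' r)"
| right: "rot r r' \<Longrightarrow> rot (Node l r) (Node l r')"

definition tamari_le :: "pbt \<Rightarrow> pbt \<Rightarrow> bool" where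
  "tamari_le = rot\<^sup>*\<^sup>*"

definition is_tamari_join :: "nat \<Rightarrow> pbt \<Rightarrow> pbt \<Rightarrow> pbt \<Rightarrow> bool" where
  "is_tamari_join n s t r \<longleftrightarrow> r \<in> pbt_set n \<and> tamari_le s r \<and> tamari_le t r \<and>
     (\<forall>w \<in> pbt_set n. tamari_le s w \<and> tamari_le t w \<longrightarrow> tamari_le r w)"

definition parking :: "nat \<Rightarrow> (nat \<Rightarrow> nat) \<times> pbt \<Rightarrow> bool" where
  "parking n p \<longleftrightarrow> fst p permutes {1..n} \<and> snd p \<in> pbt_set n \<and>
     tree_des n (snd p) \<subseteq> perm_des n (fst p)"

definition parking_le :: "nat \<Rightarrow> (nat \<Rightarrow> nat) \<times> pbt \<Rightarrow> (nat \<Rightarrow> nat) \<times> pbt \<Rightarrow> bool" where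
  "parking_le n p q \<longleftrightarrow> weak_le n (fst p) (fst q) \<and> tamari_le (snd p) (snd q)"

end

theory Submission
  imports Defs
begin

(* A left rotation x(A, y(B, C)) \<mapsto> x(y(A, B), C) only changes the leftmost leaf of B from a
   left child into a right child, so Des(t) grows along the Tamari order; likewise Des(\<sigma>) grows
   along the weak order, descents being inversions (i, i + 1). For a set D the trees with
   Des(t) \<subseteq> D have a Tamari-greatest element max_tree n D, a chain of right combs grafted to
   the left at the elements of D. Both s and t lie below max_tree n (Des(\<sigma> \<or> \<tau>)), hence so does
   s \<or> t, which gives Des(s \<or> t) \<subseteq> Des(\<sigma> \<or> \<tau>); the join property itself holds componentwise. *)

lemma length_leaf_is_right [simp]: "length (leaf_is_right b t) = leaves t"
  by (induction t arbitrary: b) auto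

lemma leaves_ge_1: "1 \<le> leaves t"
  by (induction t) auto

lemma leaves_eq_1_iff: "leaves t = 1 \<longleftrightarrow> t = Leaf"
proof (cases t)
  case (Node l r)
  then show ?thesis using leaves_ge_1[of l] leaves_ge_1[of r] by simp
qed simp

lemma leaf_is_right_first: "leaf_is_right b t ! 0 \<longleftrightarrow> b \<and> t = Leaf"
proof (induction t arbitrary: b)
  case (Node l r)
  then show ?case using leaves_ge_1[of l] by (simp add: nth_append)
qed simp

lemma leaf_is_right_last: "leaf_is_right b t ! (leaves t - 1) \<longleftrightarrow> b \<or> t \<noteq> Leaf"
proof (induction t arbitrary: b)
  case (Node l r)
  have "\<not> leaves l + leaves r - 1 < leaves l" using leaves_ge_1[of r] by simp
  then show ?case using Node.IH(2)[of True] by (simp add: nth_append)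
qed simp

lemma leaf_is_right_nth_indep: "0 < i \<Longrightarrow> leaf_is_right b t ! i = leaf_is_right c t ! i"
  by (cases t) auto

lemma tree_des_Node:
  "tree_des (leaves A + leaves B - 1) (Node A B) =
     tree_des (leaves A - 1) A \<union> (if 2 \<le> leaves A then {leaves A - 1} else {}) \<union>
     (\<lambda>i. i + leaves A) ` tree_des (leaves B - 1) B"
  (is "?lhs = ?rhs")
proof -
  let ?a = "leaves A" and ?b = "leaves B"
  have flag: "leaf_is_right False (Node A B) ! i \<longleftrightarrow>
      (if i < ?a then leaf_is_right False A ! i else leaf_is_right False B ! (i - ?a) \<and> i \<noteq> ?a)"
    if "i < ?a + ?b - 1" for i
  proof (cases "i < ?a")
    case False
    then show ?thesis
      using that leaf_is_right_nth_indep[of "i - ?a" True B False] leaf_is_right_first[of True B]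
        leaves_eq_1_iff[of B]
      by (cases "i = ?a") (auto simp: nth_append)
  qed (simp add: nth_append)
  have last_A: "leaf_is_right False A ! (?a - 1) \<longleftrightarrow> 2 \<le> ?a"
    using leaf_is_right_last[of False A] leaves_eq_1_iff[of A] leaves_ge_1[of A] by auto
  show ?thesis
  proof (intro set_eqI iffI)
    fix i assume "i \<in> ?lhs"
    then have i: "1 \<le> i" "i < ?a + ?b - 1" and fl: "leaf_is_right False (Node A B) ! i"
      unfolding tree_des_def by auto
    consider "i < ?a - 1" | "i = ?a - 1" | "?a \<le> i" by linarith
    then show "i \<in> ?rhs"
    proof cases
      case 1
      then show ?thesis using i fl flag[OF i(2)] unfolding tree_des_def by auto
    next
      case 3
      then have "i - ?a \<in> tree_des (?b - 1) B"
        using i fl flag[OF i(2)] unfolding tree_des_def by auto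
      then show ?thesis using 3 by (auto intro!: image_eqI[of _ _ "i - ?a"])
    qed (use i in auto)
  next
    fix i assume "i \<in> ?rhs"
    then show "i \<in> ?lhs"
      using flag last_A leaves_ge_1[of B] unfolding tree_des_def by (auto split: if_splits)
  qed
qed

lemma tree_des_Node_subset_iff:
  "tree_des (leaves A + leaves B - 1) (Node A B) \<subseteq> D \<longleftrightarrow>
     tree_des (leaves A - 1) A \<subseteq> D \<and> (2 \<le> leaves A \<longrightarrow> leaves A - 1 \<in> D) \<and>
     tree_des (leaves B - 1) B \<subseteq> {j. j + leaves A \<in> D}"
  unfolding tree_des_Node by auto

lemma leaf_is_right_False_True: "list_all2 (\<longrightarrow>) (leaf_is_right False t) (leaf_is_right True t)"
  by (cases t) (auto intro: list_all2_refl)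

lemma rot_leaf_is_right_mono: "rot a b \<Longrightarrow> list_all2 (\<longrightarrow>) (leaf_is_right c a) (leaf_is_right c b)"
  by (induction arbitrary: c rule: rot.induct)
    (auto intro!: list_all2_appendI list_all2_refl leaf_is_right_False_True)

lemma tamari_le_leaf_is_right_mono:
  "tamari_le a b \<Longrightarrow> list_all2 (\<longrightarrow>) (leaf_is_right c a) (leaf_is_right c b)"
  unfolding tamari_le_def
proof (induction rule: rtranclp_induct)
  case (step y z)
  show ?case by (rule list_all2_trans[OF _ step(3) rot_leaf_is_right_mono[OF step(2)]]) auto
qed (auto intro: list_all2_refl)

lemma tree_des_mono: "tamari_le a b \<Longrightarrow> a \<in> pbt_set n \<Longrightarrow> tree_des n a \<subseteq> tree_des n b"
  using list_all2_nthD[OF tamari_le_leaf_is_right_mono[of a b False]]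
  unfolding tree_des_def pbt_set_def by fastforce

lemma tamari_le_refl: "tamari_le a a"
  unfolding tamari_le_def by simp

lemma tamari_le_trans [trans]: "tamari_le a b \<Longrightarrow> tamari_le b c \<Longrightarrow> tamari_le a c"
  unfolding tamari_le_def by (rule rtranclp_trans)

lemma tamari_le_rotate: "tamari_le (Node A (Node B C)) (Node (Node A B) C)"
  unfolding tamari_le_def by (auto intro: rot.root)

lemma tamari_le_Node:
  assumes "tamari_le a a'" and "tamari_le b b'"
  shows "tamari_le (Node a b) (Node a' b')"
proof -
  have "rot\<^sup>*\<^sup>* (Node a b) (Node a' b)" using assms(1) unfolding tamari_le_def
    by (induction rule: rtranclp_induct) (auto intro: rtranclp.rtrancl_into_rtrancl rot.left)
  also have "rot\<^sup>*\<^sup>* (Node a' b) (Node a' b')" using assms(2) unfolding tamari_le_def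
    by (induction rule: rtranclp_induct) (auto intro: rtranclp.rtrancl_into_rtrancl rot.right)
  finally show ?thesis unfolding tamari_le_def .
qed

fun right_comb :: "nat \<Rightarrow> pbt" where
  "right_comb 0 = Leaf"
| "right_comb (Suc 0) = Leaf"
| "right_comb (Suc (Suc k)) = Node Leaf (right_comb (Suc k))"

lemma leaves_right_comb: "leaves (right_comb (Suc k)) = Suc k"
  by (induction k rule: right_comb.induct) auto

lemma tree_des_right_comb: "tree_des k (right_comb (Suc k)) = {}"
proof (induction k)
  case (Suc k)
  then show ?case
    using tree_des_Node[of Leaf "right_comb (Suc k)"] by (simp add: leaves_right_comb tree_des_def)
qed (simp add: tree_des_def)

definition max_below :: "nat \<Rightarrow> nat set \<Rightarrow> nat" where
  "max_below m D = Max (insert 0 (D \<inter> {1..m}))"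

lemma max_below_le: "max_below m D \<le> m"
  unfolding max_below_def by simp

lemma max_below_ge: "j \<in> D \<Longrightarrow> 1 \<le> j \<Longrightarrow> j \<le> m \<Longrightarrow> j \<le> max_below m D"
  unfolding max_below_def by simp

lemma max_below_in: "1 \<le> max_below m D \<Longrightarrow> max_below m D \<in> D"
  using Max_in[of "insert 0 (D \<inter> {1..m})"] unfolding max_below_def by fastforce

lemma max_below_shift: "max_below (m - k) {j. j + k \<in> D} = max_below m D - k"
proof -
  let ?q = "max_below m D"
  have "?q - k \<in> insert 0 ({j. j + k \<in> D} \<inter> {1..m - k})"
    using max_below_in[of m D] max_below_le[of m D] by (cases "k < ?q") auto
  moreover have "j \<le> ?q - k" if "j + k \<in> D" "1 \<le> j" "j \<le> m - k" for j
  proof -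
    have "j + k \<le> m" using that by linarith
    then show ?thesis using max_below_ge[of "j + k" D m] that by simp
  qed
  ultimately show ?thesis
    unfolding max_below_def[of "m - k"] by (intro Max_eqI) auto
qed

function max_tree :: "nat \<Rightarrow> nat set \<Rightarrow> pbt" where
  "max_tree 0 D = Leaf"
| "max_tree (Suc m) D = Node (max_tree (max_below m D) D) (right_comb (Suc m - max_below m D))"
  by pat_completeness auto
termination by (relation "measure fst") (auto simp: le_imp_less_Suc max_below_le)

lemma leaves_max_tree: "leaves (max_tree n D) = Suc n"
proof (induction n rule: less_induct)
  case (less n)
  then show ?case
    using max_below_le[of "n - 1" D] by (cases n) (auto simp: leaves_right_comb Suc_diff_le)
qed

lemma max_tree_in_pbt_set: "max_tree n D \<in> pbt_set n"
  unfolding pbt_set_def by (simp add: leaves_max_tree)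

lemma tree_des_max_tree_subset: "tree_des n (max_tree n D) \<subseteq> D"
proof (induction n rule: less_induct)
  case (less n)
  show ?case
  proof (cases n)
    case (Suc m)
    let ?q = "max_below m D"
    have "?q \<le> m" by (rule max_below_le)
    then have rc: "Suc m - ?q = Suc (m - ?q)" by (rule Suc_diff_le)
    have "leaves (max_tree ?q D) + leaves (right_comb (Suc m - ?q)) - 1 = n"
      using Suc \<open>?q \<le> m\<close> by (simp add: rc leaves_max_tree leaves_right_comb)
    moreover have "tree_des ?q (max_tree ?q D) \<subseteq> D" using less Suc \<open>?q \<le> m\<close> by simp
    ultimately show ?thesis
      using Suc max_below_in[of m D] tree_des_right_comb[of "m - ?q"]
        tree_des_Node_subset_iff[of "max_tree ?q D" "right_comb (Suc m - ?q)" D]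
      by (simp add: rc leaves_max_tree leaves_right_comb)
  qed (auto simp: tree_des_def)
qed

lemma max_tree_eq_right_comb: "max_below (n - 1) D = 0 \<Longrightarrow> max_tree n D = right_comb (Suc n)"
  by (cases n) auto

lemma max_tree_shift:
  assumes "k \<le> max_below m D"
  shows "max_tree (Suc m - k) {j. j + k \<in> D} =
    Node (max_tree (max_below m D - k) {j. j + k \<in> D}) (right_comb (Suc m - max_below m D))"
proof -
  have "max_below m D \<le> m" by (rule max_below_le)
  then have "Suc m - k = Suc (m - k)" and "Suc (m - k) - (max_below m D - k) = Suc m - max_below m D"
    using assms by simp_all
  then show ?thesis using max_below_shift[of m k D] by simp
qed

lemma max_tree_shift_beyond:
  "max_tree (m - max_below m D) {j. j + Suc (max_below m D) \<in> D} = right_comb (Suc m - max_below m D)"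
proof -
  have "max_below m D \<le> m" by (rule max_below_le)
  then show ?thesis
    using max_tree_eq_right_comb max_below_shift[of m "Suc (max_below m D)" D]
    by (simp add: Suc_diff_le)
qed

lemma tamari_le_graft:
  assumes "tamari_le B (Node X C)" and "tamari_le (Node A X) Y"
  shows "tamari_le (Node A B) (Node Y C)"
proof -
  have "tamari_le (Node A B) (Node A (Node X C))"
    using tamari_le_refl assms(1) by (rule tamari_le_Node)
  also have "tamari_le \<dots> (Node (Node A X) C)"
    by (rule tamari_le_rotate)
  also have "tamari_le \<dots> (Node Y C)"
    using assms(2) tamari_le_refl by (rule tamari_le_Node)
  finally show ?thesis .
qed

lemma tamari_le_max_tree:
  assumes "s \<in> pbt_set n" and "tree_des n s \<subseteq> D"
  shows "tamari_le s (max_tree n D)"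
  using assms
proof (induction n arbitrary: s D rule: less_induct)
  case (less n)
  show ?case
  proof (cases n)
    case 0
    then show ?thesis using less.prems leaves_eq_1_iff[of s] by (simp add: pbt_set_def tamari_le_refl)
  next
    case (Suc m)
    obtain A B where s: "s = Node A B"
      using less.prems(1) Suc leaves_eq_1_iff[of s] by (cases s) (auto simp: pbt_set_def)
    define k where "k = leaves A"
    define q where "q = max_below m D"
    define D' where "D' = {j. j + k \<in> D}"
    have "1 \<le> k" "1 \<le> leaves B" unfolding k_def by (rule leaves_ge_1)+
    moreover have "k + leaves B = Suc n" using less.prems(1) s k_def by (simp add: pbt_set_def)
    ultimately have k: "1 \<le> k" "k \<le> n" and lB: "leaves B = Suc (n - k)" by simp_all
    have "tree_des (leaves A + leaves B - 1) (Node A B) \<subseteq> D"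
      using less.prems(2) s \<open>k + leaves B = Suc n\<close> k_def by simp
    then have des_A: "tree_des (k - 1) A \<subseteq> D" and last_A: "2 \<le> k \<Longrightarrow> k - 1 \<in> D"
      and "tree_des (n - k) B \<subseteq> D'"
      unfolding tree_des_Node_subset_iff D'_def using lB k_def by simp_all
    then have B_le: "tamari_le B (max_tree (n - k) D')"
      using less.IH[of "n - k" B D'] k lB by (simp add: pbt_set_def)
    have "q \<le> m" unfolding q_def by (rule max_below_le)
    have max_tree_n: "max_tree n D = Node (max_tree q D) (right_comb (n - q))"
      using Suc q_def by simp
    \<comment> \<open>k - 1 is a descent of s (the last leaf of A is a right child), and q is the largest one.\<close>
    have "k \<le> q + 1" using last_A max_below_ge[of "k - 1" D m] k Suc q_def by fastforce
    then consider "k = q + 1" | "k \<le> q" by linarith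
    then show ?thesis
    proof cases
      case 1
      have "tamari_le A (max_tree q D)"
        using less.IH[of q A D] 1 Suc \<open>q \<le> m\<close> des_A by (simp add: pbt_set_def k_def)
      then show ?thesis
        using tamari_le_Node B_le s max_tree_n max_tree_shift_beyond[of m D] 1 Suc
        unfolding D'_def q_def by simp
    next
      case 2
      define X where "X = max_tree (q - k) D'"
      have "tamari_le (Node A X) (max_tree q D)"
      proof (rule less.IH)
        have "leaves X = Suc (q - k)" unfolding X_def by (rule leaves_max_tree)
        moreover have "tree_des (q - k) X \<subseteq> D'" unfolding X_def by (rule tree_des_max_tree_subset)
        ultimately show "Node A X \<in> pbt_set q" "tree_des q (Node A X) \<subseteq> D"
          using 2 k tree_des_Node_subset_iff[of A X D] des_A last_A
          unfolding pbt_set_def D'_def k_def by simp_all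
        show "q < n" using Suc \<open>q \<le> m\<close> by simp
      qed
      moreover have "tamari_le B (Node X (right_comb (n - q)))"
        using B_le max_tree_shift[of k m D] 2 Suc unfolding X_def D'_def q_def by simp
      ultimately show ?thesis using s max_tree_n tamari_le_graft by simp
    qed
  qed
qed

lemma perm_des_mono: "weak_le n \<sigma> \<tau> \<Longrightarrow> perm_des n \<sigma> \<subseteq> perm_des n \<tau>"
  unfolding weak_le_def perm_des_def perm_inv_def by auto

theorem mainTheorem12:
  fixes n :: nat and \<sigma> \<tau> u :: "nat \<Rightarrow> nat" and s t r :: pbt
  assumes "parking n (\<sigma>, s)" and "parking n (\<tau>, t)"
    and "is_weak_join n \<sigma> \<tau> u" and "is_tamari_join n s t r"
  shows "parking n (u, r) \<and> parking_le n (\<sigma>, s) (u, r) \<and> parking_le n (\<tau>, t) (u, r) \<and>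
    (\<forall>q. parking n q \<and> parking_le n (\<sigma>, s) q \<and> parking_le n (\<tau>, t) q \<longrightarrow> parking_le n (u, r) q)"
proof -
  have u: "u permutes {1..n}" "weak_le n \<sigma> u" "weak_le n \<tau> u"
    and u_least: "\<And>v. v permutes {1..n} \<Longrightarrow> weak_le n \<sigma> v \<Longrightarrow> weak_le n \<tau> v \<Longrightarrow> weak_le n u v"
    using assms(3) unfolding is_weak_join_def by auto
  have r: "r \<in> pbt_set n" "tamari_le s r" "tamari_le t r"
    and r_least: "\<And>w. w \<in> pbt_set n \<Longrightarrow> tamari_le s w \<Longrightarrow> tamari_le t w \<Longrightarrow> tamari_le r w"
    using assms(4) unfolding is_tamari_join_def by auto
  let ?M = "max_tree n (perm_des n u)"
  have "tamari_le s ?M" and "tamari_le t ?M"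
    using assms(1,2) perm_des_mono[OF u(2)] perm_des_mono[OF u(3)]
    by (auto simp: parking_def intro!: tamari_le_max_tree)
  then have "tamari_le r ?M" by (rule r_least[OF max_tree_in_pbt_set])
  then have "tree_des n r \<subseteq> perm_des n u"
    using tree_des_mono[OF _ r(1)] tree_des_max_tree_subset by blast
  then have "parking n (u, r)" using u(1) r(1) unfolding parking_def by simp
  then show ?thesis using u u_least r r_least unfolding parking_def parking_le_def by auto
qed

end
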